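(* Let $A$ be a $p$-torsion free ring with a ring endomorphism $\phi$ satisfying $\phi(a)\equiv a^p\pmod{pA}$ for all $a\in A$. For every $a\in A$ and $n\ge1$: (i) $[a]=s_\phi(a)+Vs_\phi(\Delta_1(a))+\cdots+V^{n-1}s_\phi(\Delta_{n-1}(a))+V^n[\Delta_n(a)]$ in $W_{n+1}(A)$; (ii) $a^{p^n}=\sum_{s=0}^n p^s\phi^{n-s}(\Delta_s(a))$; (iii) $p^{n-1}\Delta_n(a)=\Delta_1(a^{p^{n-1}})$; (iv) for $n\ge2$, $\Delta_n(a)\equiv a^{p^n-p}\Delta_1(a)+a^{p^n-2p}\Delta_1(a)^p\pmod p$ if $p=2$, and $\Delta_n(a)\equiv a^{p^n-p}\Delta_1(a)\pmod p$ if $p$ is odd.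
   Context: $W(A)$, $W_n(A)$: $p$-typical Witt vectors (of length $n$), $[a]$ Teichmüller lift, $V$ Verschiebung, ghost components $\varphi_m(a_0,a_1,\dots)=\sum_{i=0}^mp^ia_i^{p^{m-i}}$. $s_\phi:A\to W(A)$ is the unique ring map with $\varphi_m(s_\phi(a))=\phi^m(a)$ for all $m$ (also composed with restriction to $W_n(A)$). Define $\Delta_{W_n}:W_n(A)\to W_{n-1}(A)$ by $V\Delta_{W_n}(\alpha)=\alpha-s_\phi(a_0)$ for $\alpha=(a_0,\dots,a_{n-1})$. Set $\Delta_0(a)=a$ and $\Delta_s(a)=\Delta_{W_2}\circ\cdots\circ\Delta_{W_{s+1}}([a])\in A$ for $s\ge1$; in particular $\Delta_1(a)=(a^p-\phi(a))/p$. *)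

theory Defs
  imports "HOL-Computational_Algebra.Primes"
begin

text \<open>p-typical Witt vectors over a commutative ring 'a, represented as sequences
  nat => 'a; a Witt vector of length n is a sequence whose components of index
  >= n vanish.  Throughout, the ring is assumed p-torsion free (hypothesis of the
  theorem), so the ghost map is injective and the Witt ring operations on W_n(A)
  are characterised as the unique vectors with prescribed ghost components.\<close>

definition ghost :: "nat \<Rightarrow> nat \<Rightarrow> (nat \<Rightarrow> 'a::comm_ring_1) \<Rightarrow> 'a" where
  "ghost p m x = (\<Sum>i\<le>m. of_nat p ^ i * x i ^ (p ^ (m - i)))"

definition wtrunc :: "nat \<Rightarrow> (nat \<Rightarrow> 'a::zero) \<Rightarrow> bool" where
  "wtrunc n x \<longleftrightarrow> (\<forall>i\<ge>n. x i = 0)"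

definition witt_add :: "nat \<Rightarrow> nat \<Rightarrow> (nat \<Rightarrow> 'a::comm_ring_1) \<Rightarrow> (nat \<Rightarrow> 'a) \<Rightarrow> (nat \<Rightarrow> 'a)" where
  "witt_add p n x y = (THE z. wtrunc n z \<and> (\<forall>m<n. ghost p m z = ghost p m x + ghost p m y))"

definition witt_sub :: "nat \<Rightarrow> nat \<Rightarrow> (nat \<Rightarrow> 'a::comm_ring_1) \<Rightarrow> (nat \<Rightarrow> 'a) \<Rightarrow> (nat \<Rightarrow> 'a)" where
  "witt_sub p n x y = (THE z. wtrunc n z \<and> (\<forall>m<n. ghost p m z = ghost p m x - ghost p m y))"

definition witt_sum :: "nat \<Rightarrow> nat \<Rightarrow> (nat \<Rightarrow> 'a::comm_ring_1) list \<Rightarrow> (nat \<Rightarrow> 'a)" where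
  "witt_sum p n xs = foldr (witt_add p n) xs (\<lambda>_. 0)"

definition teich :: "nat \<Rightarrow> 'a::zero \<Rightarrow> (nat \<Rightarrow> 'a)" where
  "teich n a = (\<lambda>i. if i = 0 \<and> 0 < n then a else 0)"

definition wV :: "(nat \<Rightarrow> 'a::zero) \<Rightarrow> (nat \<Rightarrow> 'a)" where
  "wV x = (\<lambda>i. if i = 0 then 0 else x (i - 1))"

definition s_phi :: "nat \<Rightarrow> ('a::comm_ring_1 \<Rightarrow> 'a) \<Rightarrow> nat \<Rightarrow> 'a \<Rightarrow> (nat \<Rightarrow> 'a)" where
  "s_phi p \<phi> n a = (THE z. wtrunc n z \<and> (\<forall>m<n. ghost p m z = (\<phi> ^^ m) a))"

definition DeltaW :: "nat \<Rightarrow> ('a::comm_ring_1 \<Rightarrow> 'a) \<Rightarrow> nat \<Rightarrow> (nat \<Rightarrow> 'a) \<Rightarrow> (nat \<Rightarrow> 'a)" where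
  "DeltaW p \<phi> n \<alpha> = (THE \<beta>. wtrunc (n - 1) \<beta> \<and> wV \<beta> = witt_sub p n \<alpha> (s_phi p \<phi> n (\<alpha> 0)))"

primrec delta_iter :: "nat \<Rightarrow> ('a::comm_ring_1 \<Rightarrow> 'a) \<Rightarrow> nat \<Rightarrow> nat \<Rightarrow> (nat \<Rightarrow> 'a) \<Rightarrow> (nat \<Rightarrow> 'a)" where
  "delta_iter p \<phi> 0 n \<alpha> = \<alpha>"
| "delta_iter p \<phi> (Suc k) n \<alpha> = delta_iter p \<phi> k (n - 1) (DeltaW p \<phi> n \<alpha>)"

definition Delta :: "nat \<Rightarrow> ('a::comm_ring_1 \<Rightarrow> 'a) \<Rightarrow> nat \<Rightarrow> 'a \<Rightarrow> 'a" where
  "Delta p \<phi> s a = delta_iter p \<phi> s (s + 1) (teich (s + 1) a) 0"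

end

theory Submission
  imports Defs
begin

text \<open>Since \<open>p\<close> is a non-zero-divisor, a truncated Witt vector is determined by its ghost
  components, and a sequence \<open>w\<close> is the ghost vector of one iff it satisfies Dwork's
  congruences \<open>w (m+1) \<equiv> \<phi> (w m) mod p^(m+1)\<close>. So every Witt vector operation in the
  statement can be computed on ghost components, where \<open>\<Delta>_W\<close> becomes
  \<open>w \<mapsto> (\<lambda>m. (w (m+1) - \<phi>^(m+1) (w 0)) / p)\<close>. Iterating this on the ghost vector
  \<open>\<lambda>m. a^(p^m)\<close> of \<open>[a]\<close> gives (ii), and (i) is (ii) read on ghost components.
  Subtracting \<open>\<phi>\<close> of (ii) for \<open>n\<close> from (ii) for \<open>n+1\<close> gives
  \<open>p^(n+1) \<Delta>_(n+1)(a) = a^(p^(n+1)) - \<phi>(a)^(p^n)\<close>, whence (iii). For (iv) write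
  \<open>\<phi>(a)^(p^k) = U - t\<close> with \<open>U = a^(p^(k+1))\<close> and \<open>t = p^(k+1) \<Delta>_(k+1)(a)\<close>; expanding
  \<open>U^p - (U - t)^p\<close> to second order in \<open>t\<close> shows
  \<open>\<Delta>_(k+2)(a) \<equiv> U^(p-1) \<Delta>_(k+1)(a) - (p choose 2) p^k U^(p-2) \<Delta>_(k+1)(a)^2 mod p\<close>,
  and the middle term vanishes mod \<open>p\<close> unless \<open>p = 2\<close> and \<open>k = 0\<close>.\<close>

lemma dvd_diff_iff_eq_add: "(d::'a::comm_ring_1) dvd x - y \<longleftrightarrow> (\<exists>c. x = y + d * c)"
  by (metis add_diff_cancel_left' diff_add_cancel dvd_def)

lemma dvd_power_diff_power:
  fixes x y t :: "'a::comm_ring_1"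
  assumes "t dvd x - y"
  shows "t dvd x ^ m - y ^ m"
  using assms power_diff_sumr2[of x m y] by (metis dvd_mult2)

lemma of_nat_power_dvd_power_diff_power:
  fixes x y :: "'a::comm_ring_1"
  assumes "1 \<le> j" and xy: "of_nat p ^ j dvd x - y"
  shows "of_nat p ^ Suc j dvd x ^ p - y ^ p"
proof -
  define S where "S = (\<Sum>i<p. y ^ (p - Suc i) * x ^ i)"
  have "(\<Sum>i<p. y ^ (p - Suc i) * y ^ i) = (\<Sum>i<p. y ^ (p - 1))"
    by (intro sum.cong) (auto simp: power_add[symmetric])
  then have "S - of_nat p * y ^ (p - 1) = (\<Sum>i<p. y ^ (p - Suc i) * (x ^ i - y ^ i))"
    unfolding S_def by (simp add: sum_subtractf algebra_simps)
  moreover have "of_nat p dvd (\<Sum>i<p. y ^ (p - Suc i) * (x ^ i - y ^ i))"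
    using \<open>1 \<le> j\<close> xy by (intro dvd_sum dvd_mult dvd_power_diff_power)
      (auto intro: dvd_trans[OF dvd_power[of j]])
  ultimately have "of_nat p dvd S"
    by (metis diff_add_cancel dvd_add dvd_triv_left)
  then have "of_nat p ^ j * of_nat p dvd (x - y) * S"
    using xy by (rule mult_dvd_mono[rotated])
  then show ?thesis
    unfolding S_def power_diff_sumr2[of x p y] by (simp add: mult.commute)
qed

lemma of_nat_power_dvd_power_power_diff:
  fixes x y :: "'a::comm_ring_1"
  assumes "of_nat p dvd x - y"
  shows "of_nat p ^ Suc k dvd x ^ (p ^ k) - y ^ (p ^ k)"
proof (induction k)
  case (Suc k)
  have "of_nat p ^ Suc (Suc k) dvd (x ^ p ^ k) ^ p - (y ^ p ^ k) ^ p"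
    using Suc by (intro of_nat_power_dvd_power_diff_power) auto
  then show ?case
    by (simp add: power_mult[symmetric] mult.commute)
qed (use assms in simp)

lemma power_diff_second_order:
  fixes u t :: "'a::comm_ring_1"
  shows "\<exists>c. (u - t) ^ (m + 2) = u ^ (m + 2) - of_nat (m + 2) * t * u ^ (m + 1)
            + of_nat ((m + 2) choose 2) * t\<^sup>2 * u ^ m - t ^ 3 * c"
proof (induction m)
  case 0
  show ?case
    by (intro exI[of _ 0]) (simp add: choose_two power2_eq_square algebra_simps)
next
  case (Suc m)
  then obtain c where c: "(u - t) ^ (m + 2) = u ^ (m + 2) - of_nat (m + 2) * t * u ^ (m + 1)
            + of_nat ((m + 2) choose 2) * t\<^sup>2 * u ^ m - t ^ 3 * c" ..
  define X where "X = u ^ m"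
  define N :: 'a where "N = of_nat (m + 2)"
  define C :: 'a where "C = of_nat ((m + 2) choose 2)"
  have coeffs: "of_nat (Suc m + 2) = N + 1" "of_nat ((Suc m + 2) choose 2) = C + N"
    unfolding N_def C_def by (simp_all add: numeral_2_eq_2)
  have powers: "u ^ (m + 2) = X * u\<^sup>2" "u ^ (m + 1) = X * u" "u ^ (Suc m + 2) = X * u ^ 3"
    "u ^ (Suc m + 1) = X * u\<^sup>2" "u ^ Suc m = X * u"
    unfolding X_def by (simp_all add: power_add power2_eq_square power3_eq_cube mult_ac)
  have "(u - t) ^ (Suc m + 2) = (u - t) * (u - t) ^ (m + 2)"
    by simp
  also have "\<dots> = (u - t) * (X * u\<^sup>2 - N * t * (X * u) + C * t\<^sup>2 * X - t ^ 3 * c)"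
    by (simp only: c powers N_def[symmetric] C_def[symmetric] X_def[symmetric])
  also have "\<dots> = X * u ^ 3 - (N + 1) * t * (X * u\<^sup>2) + (C + N) * t\<^sup>2 * (X * u)
      - t ^ 3 * (u * c + C * X - t * c)"
    by (simp add: algebra_simps power2_eq_square power3_eq_cube)
  also have "\<dots> = u ^ (Suc m + 2) - of_nat (Suc m + 2) * t * u ^ (Suc m + 1)
      + of_nat ((Suc m + 2) choose 2) * t\<^sup>2 * u ^ Suc m - t ^ 3 * (u * c + C * X - t * c)"
    by (simp only: coeffs powers)
  finally show ?case ..
qed

lemma power_diff_power_second_order:
  fixes u t :: "'a::comm_ring_1"
  assumes "2 \<le> p"
  shows "\<exists>c. u ^ p - (u - t) ^ p = of_nat p * t * u ^ (p - 1)
            - of_nat (p choose 2) * t\<^sup>2 * u ^ (p - 2) + t ^ 3 * c"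
proof -
  obtain m where p: "p = m + 2"
    using assms le_Suc_ex by (metis add.commute)
  obtain c where "(u - t) ^ (m + 2) = u ^ (m + 2) - of_nat (m + 2) * t * u ^ (m + 1)
      + of_nat ((m + 2) choose 2) * t\<^sup>2 * u ^ m - t ^ 3 * c"
    using power_diff_second_order by blast
  then have "u ^ p - (u - t) ^ p = of_nat p * t * u ^ (p - 1)
      - of_nat (p choose 2) * t\<^sup>2 * u ^ (p - 2) + t ^ 3 * c"
    unfolding p by (simp only: add_diff_cancel_right' add_2_eq_Suc' diff_Suc_1) (simp add: algebra_simps)
  then show ?thesis ..
qed

lemma ghost_cong: "(\<And>i. i \<le> m \<Longrightarrow> x i = y i) \<Longrightarrow> ghost p m x = ghost p m y"
  unfolding ghost_def by (intro sum.cong) auto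

lemma ghost_0 [simp]: "ghost p 0 x = x 0"
  by (simp add: ghost_def)

lemma ghost_eq_sum_lessThan:
  "ghost p m x = (\<Sum>i<m. of_nat p ^ i * x i ^ (p ^ (m - i))) + of_nat p ^ m * x m"
  unfolding ghost_def by (simp add: lessThan_Suc_atMost[symmetric])

lemma ghost_Suc:
  "ghost p (Suc m) x = (\<Sum>i\<le>m. of_nat p ^ i * (x i ^ p) ^ (p ^ (m - i)))
     + of_nat p ^ Suc m * x (Suc m)"
  unfolding ghost_eq_sum_lessThan lessThan_Suc_atMost
  by (intro arg_cong2[where f = "(+)"] sum.cong refl)
    (simp add: Suc_diff_le power_mult[symmetric] mult.commute)

lemma ghost_zero [simp]: "0 < p \<Longrightarrow> ghost p m (\<lambda>_. 0) = 0"
  by (simp add: ghost_def power_0_left)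

lemma wV_0 [simp]: "wV x 0 = 0"
  by (simp add: wV_def)

lemma ghost_wV_Suc: "0 < p \<Longrightarrow> ghost p (Suc m) (wV x) = of_nat p * ghost p m x"
  unfolding ghost_def sum.atMost_Suc_shift
  by (simp add: wV_def sum_distrib_left mult.assoc power_0_left)

lemma ghost_funpow_wV:
  assumes "0 < p"
  shows "ghost p m ((wV ^^ s) x) = (if s \<le> m then of_nat p ^ s * ghost p (m - s) x else 0)"
proof (induction s arbitrary: m)
  case (Suc s)
  then show ?case
    using assms by (cases m) (simp_all add: ghost_wV_Suc)
qed simp

lemma ghost_teich: "0 < p \<Longrightarrow> 0 < N \<Longrightarrow> ghost p m (teich N b) = b ^ (p ^ m)"
  unfolding ghost_def teich_def by (simp add: sum.atMost_shift power_0_left)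

lemma wtrunc_teich: "wtrunc N (teich N b)"
  by (simp add: wtrunc_def teich_def)

lemma power_pow_Suc_mult_pred:
  fixes x :: "'a::monoid_mult" and p k e :: nat
  assumes "e \<le> p ^ Suc k"
  shows "x ^ (p ^ Suc k * (p - 1)) * x ^ (p ^ Suc k - e) = x ^ (p ^ Suc (Suc k) - e)"
proof -
  have "p ^ Suc k * (p - 1) + p ^ Suc k = p ^ Suc (Suc k)"
    by (cases p) (simp_all add: power_Suc2[of _ "Suc k"] del: power_Suc)
  with assms have "p ^ Suc k * (p - 1) + (p ^ Suc k - e) = p ^ Suc (Suc k) - e"
    by linarith
  then show ?thesis
    by (simp only: power_add[symmetric])
qed

locale frobenius_lift =
  fixes p :: nat and \<phi> :: "'a::comm_ring_1 \<Rightarrow> 'a"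
  assumes prime_p: "prime p"
    and p_torsion_free: "of_nat p * x = 0 \<Longrightarrow> x = 0"
    and hom_add: "\<phi> (x + y) = \<phi> x + \<phi> y"
    and hom_mult: "\<phi> (x * y) = \<phi> x * \<phi> y"
    and hom_one: "\<phi> 1 = 1"
    and frobenius_cong: "of_nat p dvd x ^ p - \<phi> x"
begin

abbreviation P :: 'a where "P \<equiv> of_nat p"

lemma p_ge_2: "2 \<le> p"
  using prime_p prime_ge_2_nat by blast

lemma p_pos: "0 < p"
  using p_ge_2 by simp

lemma hom_zero: "\<phi> 0 = 0"
  using hom_add[of 0 0] by simp

lemma hom_diff: "\<phi> (x - y) = \<phi> x - \<phi> y"
  using hom_add[of "x - y" y] by (simp add: algebra_simps)

lemma hom_sum: "\<phi> (sum f A) = (\<Sum>i\<in>A. \<phi> (f i))"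
  by (induction A rule: infinite_finite_induct) (auto simp: hom_zero hom_add)

lemma hom_of_nat: "\<phi> (of_nat k) = of_nat k"
  by (induction k) (auto simp: hom_zero hom_add hom_one)

lemma hom_power: "\<phi> (x ^ k) = \<phi> x ^ k"
  by (induction k) (auto simp: hom_one hom_mult)

lemma P_power_mult_cancel: "P ^ m * x = P ^ m * y \<Longrightarrow> x = y"
proof (induction m arbitrary: x y)
  case (Suc m)
  have "P * (P ^ m * x - P ^ m * y) = 0"
    using Suc.prems by (simp add: algebra_simps)
  then have "P ^ m * x - P ^ m * y = 0"
    by (rule p_torsion_free)
  then show ?case
    using Suc.IH by simp
qed simp

lemma ghost_inj:
  fixes x y :: "nat \<Rightarrow> 'a"
  assumes "wtrunc N x" "wtrunc N y" "\<And>m. m < N \<Longrightarrow> ghost p m x = ghost p m y"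
  shows "x = y"
proof -
  have "x j = y j" if "j < N" for j
    using that
  proof (induction j rule: less_induct)
    case (less j)
    then have "(\<Sum>i<j. P ^ i * x i ^ (p ^ (j - i))) = (\<Sum>i<j. P ^ i * y i ^ (p ^ (j - i)))"
      by (intro sum.cong) auto
    with assms(3)[OF less.prems] have "P ^ j * x j = P ^ j * y j"
      unfolding ghost_eq_sum_lessThan by simp
    then show ?case
      by (rule P_power_mult_cancel)
  qed
  with assms(1,2) show ?thesis
    unfolding wtrunc_def by (metis ext not_less)
qed

definition dwork_seq :: "(nat \<Rightarrow> 'a) \<Rightarrow> bool" where
  "dwork_seq w \<longleftrightarrow> (\<forall>m. P ^ Suc m dvd w (Suc m) - \<phi> (w m))"

lemma dwork_seq_ghost: "dwork_seq (\<lambda>m. ghost p m x)"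
  unfolding dwork_seq_def
proof
  fix m
  have "\<phi> (ghost p m x) = (\<Sum>i\<le>m. P ^ i * \<phi> (x i) ^ (p ^ (m - i)))"
    unfolding ghost_def by (simp add: hom_sum hom_mult hom_power hom_of_nat)
  then have split: "ghost p (Suc m) x - \<phi> (ghost p m x) =
     (\<Sum>i\<le>m. P ^ i * ((x i ^ p) ^ (p ^ (m - i)) - \<phi> (x i) ^ (p ^ (m - i))))
     + P ^ Suc m * x (Suc m)"
    unfolding ghost_Suc by (simp add: sum_subtractf algebra_simps)
  have "P ^ Suc m dvd P ^ i * ((x i ^ p) ^ (p ^ (m - i)) - \<phi> (x i) ^ (p ^ (m - i)))"
    if "i \<le> m" for i
  proof -
    have "P ^ Suc m = P ^ i * P ^ Suc (m - i)"
      using that by (metis Suc_diff_le add_Suc_right le_add_diff_inverse power_add)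
    then show ?thesis
      by (simp only:) (intro mult_dvd_mono dvd_refl of_nat_power_dvd_power_power_diff frobenius_cong)
  qed
  then show "P ^ Suc m dvd ghost p (Suc m) x - \<phi> (ghost p m x)"
    unfolding split by (intro dvd_add dvd_sum) auto
qed

lemma dwork_seq_add:
  assumes "dwork_seq v" "dwork_seq w"
  shows "dwork_seq (\<lambda>m. v m + w m)"
  unfolding dwork_seq_def
proof
  fix m
  have "v (Suc m) + w (Suc m) - \<phi> (v m + w m) = (v (Suc m) - \<phi> (v m)) + (w (Suc m) - \<phi> (w m))"
    by (simp add: hom_add)
  then show "P ^ Suc m dvd v (Suc m) + w (Suc m) - \<phi> (v m + w m)"
    using assms unfolding dwork_seq_def by (metis dvd_add)
qed

lemma dwork_seq_diff:
  assumes "dwork_seq v" "dwork_seq w"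
  shows "dwork_seq (\<lambda>m. v m - w m)"
  unfolding dwork_seq_def
proof
  fix m
  have "v (Suc m) - w (Suc m) - \<phi> (v m - w m) = (v (Suc m) - \<phi> (v m)) - (w (Suc m) - \<phi> (w m))"
    by (simp add: hom_diff)
  then show "P ^ Suc m dvd v (Suc m) - w (Suc m) - \<phi> (v m - w m)"
    using assms unfolding dwork_seq_def by (metis dvd_diff)
qed

lemma dwork_seq_funpow: "dwork_seq (\<lambda>m. (\<phi> ^^ m) b)"
  by (simp add: dwork_seq_def)

lemma dwork_seq_ex_ghost_vector:
  assumes "dwork_seq w"
  shows "\<exists>x. wtrunc N x \<and> (\<forall>m<N. ghost p m x = w m)"
proof (induction N)
  case 0
  show ?case by (intro exI[of _ "\<lambda>_. 0"]) (simp add: wtrunc_def)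
next
  case (Suc N)
  then obtain x where x: "wtrunc N x" "\<forall>m<N. ghost p m x = w m" by blast
  have "P ^ N dvd w N - ghost p N x"
  proof (cases N)
    case (Suc M)
    have "w N - ghost p N x = (w (Suc M) - \<phi> (w M)) - (ghost p (Suc M) x - \<phi> (ghost p M x))"
      using x(2) Suc by simp
    then show ?thesis
      using assms dwork_seq_ghost[of x] Suc unfolding dwork_seq_def by (metis dvd_diff)
  qed simp
  then obtain c where c: "w N - ghost p N x = P ^ N * c" ..
  have "x N = 0" using x(1) by (simp add: wtrunc_def)
  have "wtrunc (Suc N) (x(N := c))"
    using x(1) by (simp add: wtrunc_def)
  moreover have "ghost p m (x(N := c)) = w m" if "m < Suc N" for m
  proof (cases "m < N")
    case True
    then have "ghost p m (x(N := c)) = ghost p m x" by (intro ghost_cong) auto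
    then show ?thesis using x(2) True by simp
  next
    case False
    then have "m = N" using that by simp
    have "ghost p N (x(N := c)) = ghost p N x + P ^ N * c"
      using \<open>x N = 0\<close> unfolding ghost_eq_sum_lessThan by simp
    then show ?thesis using c \<open>m = N\<close> by (simp add: algebra_simps)
  qed
  ultimately show ?case by blast
qed

lemma ghost_vector_The:
  fixes N :: nat
  assumes "dwork_seq w"
  defines "x \<equiv> THE z. wtrunc N z \<and> (\<forall>m<N. ghost p m z = w m)"
  shows "wtrunc N x" and "m < N \<Longrightarrow> ghost p m x = w m"
proof -
  have "\<exists>!z. wtrunc N z \<and> (\<forall>m<N. ghost p m z = w m)"
    using dwork_seq_ex_ghost_vector[OF assms(1)] ghost_inj by metis
  from theI'[OF this] show "wtrunc N x" "m < N \<Longrightarrow> ghost p m x = w m"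
    unfolding x_def by auto
qed

lemma wtrunc_witt_add:
  fixes x y :: "nat \<Rightarrow> 'a"
  shows "wtrunc N (witt_add p N x y)"
  unfolding witt_add_def using ghost_vector_The[OF dwork_seq_add[OF dwork_seq_ghost dwork_seq_ghost]] by simp

lemma ghost_witt_add:
  fixes x y :: "nat \<Rightarrow> 'a"
  shows "m < N \<Longrightarrow> ghost p m (witt_add p N x y) = ghost p m x + ghost p m y"
  unfolding witt_add_def using ghost_vector_The[OF dwork_seq_add[OF dwork_seq_ghost dwork_seq_ghost]] by simp

lemma wtrunc_witt_sub:
  fixes x y :: "nat \<Rightarrow> 'a"
  shows "wtrunc N (witt_sub p N x y)"
  unfolding witt_sub_def using ghost_vector_The[OF dwork_seq_diff[OF dwork_seq_ghost dwork_seq_ghost]] by simp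

lemma ghost_witt_sub:
  fixes x y :: "nat \<Rightarrow> 'a"
  shows "m < N \<Longrightarrow> ghost p m (witt_sub p N x y) = ghost p m x - ghost p m y"
  unfolding witt_sub_def using ghost_vector_The[OF dwork_seq_diff[OF dwork_seq_ghost dwork_seq_ghost]] by simp

lemma ghost_s_phi:
  fixes b :: 'a
  shows "m < N \<Longrightarrow> ghost p m (s_phi p \<phi> N b) = (\<phi> ^^ m) b"
  unfolding s_phi_def by (rule ghost_vector_The[OF dwork_seq_funpow])

lemma wtrunc_witt_sum:
  fixes xs :: "(nat \<Rightarrow> 'a) list"
  shows "wtrunc N (witt_sum p N xs)"
proof (cases xs)
  case Nil
  then show ?thesis by (simp add: witt_sum_def wtrunc_def)
qed (simp add: witt_sum_def wtrunc_witt_add)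

lemma ghost_witt_sum:
  fixes xs :: "(nat \<Rightarrow> 'a) list"
  shows "m < N \<Longrightarrow> ghost p m (witt_sum p N xs) = (\<Sum>x\<leftarrow>xs. ghost p m x)"
  by (induction xs) (simp_all add: witt_sum_def ghost_witt_add p_pos)

lemma DeltaW_ghost:
  fixes \<alpha> :: "nat \<Rightarrow> 'a"
  assumes "wtrunc n \<alpha>" "1 \<le> n"
  shows "wtrunc (n - 1) (DeltaW p \<phi> n \<alpha>)"
    and "Suc m < n \<Longrightarrow> P * ghost p m (DeltaW p \<phi> n \<alpha>) = ghost p (Suc m) \<alpha> - (\<phi> ^^ Suc m) (\<alpha> 0)"
proof -
  define \<gamma> where "\<gamma> = witt_sub p n \<alpha> (s_phi p \<phi> n (\<alpha> 0))"
  have ghost_\<gamma>: "ghost p m \<gamma> = ghost p m \<alpha> - (\<phi> ^^ m) (\<alpha> 0)" if "m < n" for m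
    using that unfolding \<gamma>_def by (simp add: ghost_witt_sub ghost_s_phi)
  have "\<gamma> 0 = 0"
    using ghost_\<gamma>[of 0] assms(2) by simp
  then have V\<gamma>: "wV (\<lambda>i. \<gamma> (Suc i)) = \<gamma>"
    by (auto simp: wV_def fun_eq_iff split: nat.split)
  have "DeltaW p \<phi> n \<alpha> = (\<lambda>i. \<gamma> (Suc i))"
    unfolding DeltaW_def
  proof (rule the_equality)
    show "wtrunc (n - 1) (\<lambda>i. \<gamma> (Suc i)) \<and> wV (\<lambda>i. \<gamma> (Suc i)) = witt_sub p n \<alpha> (s_phi p \<phi> n (\<alpha> 0))"
      using wtrunc_witt_sub V\<gamma> unfolding \<gamma>_def wtrunc_def by auto
  next
    fix \<beta> assume "wtrunc (n - 1) \<beta> \<and> wV \<beta> = witt_sub p n \<alpha> (s_phi p \<phi> n (\<alpha> 0))"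
    then have "wV \<beta> (Suc i) = \<gamma> (Suc i)" for i
      unfolding \<gamma>_def by simp
    then show "\<beta> = (\<lambda>i. \<gamma> (Suc i))"
      by (simp add: wV_def fun_eq_iff)
  qed
  moreover have "wtrunc (n - 1) (\<lambda>i. \<gamma> (Suc i))"
    using wtrunc_witt_sub unfolding \<gamma>_def wtrunc_def by auto
  moreover have "P * ghost p m (\<lambda>i. \<gamma> (Suc i)) = ghost p (Suc m) \<gamma>"
    using ghost_wV_Suc[OF p_pos, of m "\<lambda>i. \<gamma> (Suc i)"] unfolding V\<gamma> by simp
  ultimately show "wtrunc (n - 1) (DeltaW p \<phi> n \<alpha>)"
    and "Suc m < n \<Longrightarrow> P * ghost p m (DeltaW p \<phi> n \<alpha>) = ghost p (Suc m) \<alpha> - (\<phi> ^^ Suc m) (\<alpha> 0)"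
    using ghost_\<gamma> by auto
qed

text \<open>The operator \<open>\<Delta>\<^sub>W\<^sub>n\<close> on ghost components; the choice is unique because \<open>p\<close> is a
  non-zero-divisor.\<close>

definition ghost_delta :: "(nat \<Rightarrow> 'a) \<Rightarrow> nat \<Rightarrow> 'a" where
  "ghost_delta w m = (SOME y. P * y = w (Suc m) - (\<phi> ^^ Suc m) (w 0))"

lemma ghost_delta_eqI: "P * y = w (Suc m) - (\<phi> ^^ Suc m) (w 0) \<Longrightarrow> ghost_delta w m = y"
  unfolding ghost_delta_def
  by (rule some_equality) (use P_power_mult_cancel[of 1] in auto)

lemma delta_iter_ghost:
  fixes \<alpha> :: "nat \<Rightarrow> 'a"
  assumes "k < n" "wtrunc n \<alpha>" "\<And>m. m < n \<Longrightarrow> ghost p m \<alpha> = w m"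
  shows "wtrunc (n - k) (delta_iter p \<phi> k n \<alpha>)
    \<and> (\<forall>m < n - k. ghost p m (delta_iter p \<phi> k n \<alpha>) = (ghost_delta ^^ k) w m)"
  using assms
proof (induction k arbitrary: n \<alpha> w)
  case (Suc k)
  let ?\<beta> = "DeltaW p \<phi> n \<alpha>"
  have "ghost p m ?\<beta> = ghost_delta w m" if "m < n - 1" for m
    using that Suc.prems DeltaW_ghost(2)[of n \<alpha> m] Suc.prems(3)[of 0]
    by (intro ghost_delta_eqI[symmetric]) simp
  then have "wtrunc (n - 1 - k) (delta_iter p \<phi> k (n - 1) ?\<beta>)
      \<and> (\<forall>m < n - 1 - k. ghost p m (delta_iter p \<phi> k (n - 1) ?\<beta>) = (ghost_delta ^^ k) (ghost_delta w) m)"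
    using Suc.IH[of "n - 1" ?\<beta> "ghost_delta w"] Suc.prems DeltaW_ghost(1)[of n \<alpha>] by auto
  then show ?case
    by (simp add: funpow_Suc_right del: funpow.simps)
qed simp

definition Delta_ghost :: "'a \<Rightarrow> nat \<Rightarrow> nat \<Rightarrow> 'a" where
  "Delta_ghost a k = (ghost_delta ^^ k) (\<lambda>m. a ^ (p ^ m))"

lemma ghost_delta_iter_teich:
  assumes "k + m < n"
  shows "ghost p m (delta_iter p \<phi> k n (teich n a)) = Delta_ghost a k m"
  using assms delta_iter_ghost[of k n "teich n a" "\<lambda>m. a ^ (p ^ m)"]
  by (simp add: Delta_ghost_def wtrunc_teich ghost_teich p_pos)

lemma Delta_eq_Delta_ghost: "Delta p \<phi> k a = Delta_ghost a k 0"
  using ghost_delta_iter_teich[of k 0 "k + 1" a] by (simp add: Delta_def)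

lemma Delta_ghost_Suc:
  "P * Delta_ghost a (Suc k) m = Delta_ghost a k (Suc m) - (\<phi> ^^ Suc m) (Delta_ghost a k 0)"
proof -
  define \<alpha> where "\<alpha> = delta_iter p \<phi> k (k + m + 2) (teich (k + m + 2) a)"
  have "wtrunc (m + 2) \<alpha>"
    using delta_iter_ghost[of k "k + m + 2" "teich (k + m + 2) a" "\<lambda>m. a ^ (p ^ m)"]
    by (simp add: \<alpha>_def wtrunc_teich ghost_teich p_pos)
  moreover have ghost_\<alpha>: "ghost p j \<alpha> = Delta_ghost a k j" if "j < m + 2" for j
    using that ghost_delta_iter_teich unfolding \<alpha>_def by simp
  ultimately have "P * ghost p m (DeltaW p \<phi> (m + 2) \<alpha>) = Delta_ghost a k (Suc m) - (\<phi> ^^ Suc m) (Delta_ghost a k 0)"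
    using DeltaW_ghost(2)[of "m + 2" \<alpha> m] ghost_\<alpha>[of 0, symmetric] by simp
  then have "ghost_delta (Delta_ghost a k) m = ghost p m (DeltaW p \<phi> (m + 2) \<alpha>)"
    by (rule ghost_delta_eqI)
  then show ?thesis
    using \<open>P * ghost p m _ = _\<close> by (simp add: Delta_ghost_def)
qed

lemma Delta_ghost_eq_sum:
  "Delta_ghost a k m = (\<Sum>j\<le>m. P ^ j * (\<phi> ^^ (m - j)) (Delta_ghost a (k + j) 0))"
proof (induction m arbitrary: k)
  case (Suc m)
  have "Delta_ghost a k (Suc m) = (\<phi> ^^ Suc m) (Delta_ghost a k 0) + P * Delta_ghost a (Suc k) m"
    using Delta_ghost_Suc[of a k m] by (simp add: algebra_simps del: funpow.simps)
  also have "\<dots> = (\<phi> ^^ Suc m) (Delta_ghost a k 0)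
      + (\<Sum>j\<le>m. P ^ Suc j * (\<phi> ^^ (m - j)) (Delta_ghost a (Suc k + j) 0))"
    unfolding Suc.IH[of "Suc k"] by (simp add: sum_distrib_left mult.assoc del: funpow.simps)
  also have "\<dots> = (\<Sum>j\<le>Suc m. P ^ j * (\<phi> ^^ (Suc m - j)) (Delta_ghost a (k + j) 0))"
    unfolding sum.atMost_Suc_shift by (simp del: funpow.simps)
  finally show ?case .
qed simp

lemma power_eq_sum_Delta:
  "a ^ (p ^ n) = (\<Sum>s\<le>n. P ^ s * (\<phi> ^^ (n - s)) (Delta p \<phi> s a))"
  using Delta_ghost_eq_sum[of a 0 n] by (simp add: Delta_ghost_def Delta_eq_Delta_ghost)

lemma P_power_mult_Delta_Suc:
  "P ^ Suc n * Delta p \<phi> (Suc n) a = a ^ (p ^ Suc n) - \<phi> a ^ (p ^ n)"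
proof -
  have "\<phi> a ^ (p ^ n) = \<phi> (\<Sum>s\<le>n. P ^ s * (\<phi> ^^ (n - s)) (Delta p \<phi> s a))"
    using power_eq_sum_Delta[of a n] by (metis hom_power)
  also have "\<dots> = (\<Sum>s\<le>n. P ^ s * \<phi> ((\<phi> ^^ (n - s)) (Delta p \<phi> s a)))"
    by (simp add: hom_power hom_sum hom_mult hom_of_nat del: funpow.simps)
  also have "\<dots> = (\<Sum>s\<le>n. P ^ s * (\<phi> ^^ (Suc n - s)) (Delta p \<phi> s a))"
    by (intro sum.cong) (auto simp: Suc_diff_le)
  finally show ?thesis
    using power_eq_sum_Delta[of a "Suc n"] by (simp del: funpow.simps)
qed

lemma P_power_mult_Delta:
  assumes "1 \<le> n"
  shows "P ^ (n - 1) * Delta p \<phi> n a = Delta p \<phi> 1 (a ^ (p ^ (n - 1)))"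
proof -
  obtain k where n: "n = Suc k" using assms by (cases n) auto
  have "P * (P ^ k * Delta p \<phi> (Suc k) a) = P * Delta p \<phi> 1 (a ^ (p ^ k))"
    using P_power_mult_Delta_Suc[of k a] P_power_mult_Delta_Suc[of 0 "a ^ p ^ k"]
    by (simp add: hom_power power_mult[symmetric] mult_ac)
  then show ?thesis
    using n P_power_mult_cancel[of 1] by simp
qed

lemma P_power_mult_Delta_Suc_Suc:
  fixes a :: 'a and k :: nat
  defines "U \<equiv> a ^ (p ^ Suc k)" and "t \<equiv> P ^ Suc k * Delta p \<phi> (Suc k) a"
  shows "P ^ Suc (Suc k) * Delta p \<phi> (Suc (Suc k)) a = U ^ p - (U - t) ^ p"
proof -
  have "\<phi> a ^ (p ^ k) = U - t"
    using P_power_mult_Delta_Suc[of k a] unfolding U_def t_def by simp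
  then have "(U - t) ^ p = \<phi> a ^ (p ^ Suc k)"
    by (simp only: power_Suc2 power_mult)
  moreover have "U ^ p = a ^ (p ^ Suc (Suc k))"
    unfolding U_def by (simp only: power_Suc2 power_mult)
  ultimately show ?thesis
    by (simp only: P_power_mult_Delta_Suc)
qed

lemma Delta_Suc_Suc_expansion:
  "\<exists>c. Delta p \<phi> (Suc (Suc k)) a = a ^ (p ^ Suc k * (p - 1)) * Delta p \<phi> (Suc k) a
      - of_nat (p choose 2) * P ^ k * a ^ (p ^ Suc k * (p - 2)) * (Delta p \<phi> (Suc k) a)\<^sup>2
      + P ^ (2 * k + 1) * c"
proof -
  define U where "U = a ^ (p ^ Suc k)"
  define D where "D = Delta p \<phi> (Suc k) a"
  define t where "t = P ^ Suc k * D"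
  have "P ^ Suc (Suc k) * Delta p \<phi> (Suc (Suc k)) a = U ^ p - (U - t) ^ p"
    using P_power_mult_Delta_Suc_Suc[of k a] unfolding U_def t_def D_def .
  moreover obtain c where "U ^ p - (U - t) ^ p = P * t * U ^ (p - 1)
      - of_nat (p choose 2) * t\<^sup>2 * U ^ (p - 2) + t ^ 3 * c"
    using power_diff_power_second_order[OF p_ge_2] by blast
  moreover have "P * t = P ^ Suc (Suc k) * D"
    unfolding t_def by (simp add: mult.assoc)
  moreover have "(P ^ Suc k)\<^sup>2 = P ^ Suc (Suc k) * P ^ k"
    and "(P ^ Suc k) ^ 3 = P ^ Suc (Suc k) * P ^ (2 * k + 1)"
  proof -
    have "Suc k * 2 = Suc (Suc k) + k" and "Suc k * 3 = Suc (Suc k) + (2 * k + 1)"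
      by simp_all
    then show "(P ^ Suc k)\<^sup>2 = P ^ Suc (Suc k) * P ^ k"
      and "(P ^ Suc k) ^ 3 = P ^ Suc (Suc k) * P ^ (2 * k + 1)"
      by (simp_all only: power_mult[symmetric] power_add[symmetric])
  qed
  then have "t\<^sup>2 = P ^ Suc (Suc k) * (P ^ k * D\<^sup>2)"
    and "t ^ 3 = P ^ Suc (Suc k) * (P ^ (2 * k + 1) * D ^ 3)"
    unfolding t_def power_mult_distrib by (simp_all only: mult.assoc)
  ultimately have "P ^ Suc (Suc k) * Delta p \<phi> (Suc (Suc k)) a = P ^ Suc (Suc k) *
      (U ^ (p - 1) * D - of_nat (p choose 2) * P ^ k * U ^ (p - 2) * D\<^sup>2 + P ^ (2 * k + 1) * (D ^ 3 * c))"
    by (simp only:) (simp add: algebra_simps)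
  then have "Delta p \<phi> (Suc (Suc k)) a =
      U ^ (p - 1) * D - of_nat (p choose 2) * P ^ k * U ^ (p - 2) * D\<^sup>2 + P ^ (2 * k + 1) * (D ^ 3 * c)"
    by (rule P_power_mult_cancel)
  then show ?thesis
    unfolding U_def D_def power_mult by blast
qed

lemma Delta_Suc_Suc_cong:
  assumes "0 < k \<or> odd p" and "P dvd Delta p \<phi> (Suc k) a - y"
  shows "P dvd Delta p \<phi> (Suc (Suc k)) a - a ^ (p ^ Suc k * (p - 1)) * y"
proof -
  have "P dvd of_nat (p choose 2) * P ^ k"
  proof (cases "k = 0")
    case True
    with assms(1) have "2 < p"
      using p_ge_2 by (cases "p = 2") auto
    then obtain r where "p choose 2 = p * r"
      using dvd_choose_prime[OF _ _ _ prime_p, of 2] by fastforce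
    then show ?thesis by simp
  qed simp
  moreover obtain c where "Delta p \<phi> (Suc (Suc k)) a = a ^ (p ^ Suc k * (p - 1)) * Delta p \<phi> (Suc k) a
      - of_nat (p choose 2) * P ^ k * a ^ (p ^ Suc k * (p - 2)) * (Delta p \<phi> (Suc k) a)\<^sup>2
      + P ^ (2 * k + 1) * c"
    using Delta_Suc_Suc_expansion by blast
  then have "Delta p \<phi> (Suc (Suc k)) a - a ^ (p ^ Suc k * (p - 1)) * y =
      a ^ (p ^ Suc k * (p - 1)) * (Delta p \<phi> (Suc k) a - y)
      - of_nat (p choose 2) * P ^ k * (a ^ (p ^ Suc k * (p - 2)) * (Delta p \<phi> (Suc k) a)\<^sup>2)
      + P * (P ^ (2 * k) * c)"
    by (simp add: algebra_simps)
  ultimately show ?thesis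
    using assms(2) by (metis dvd_add dvd_diff dvd_mult dvd_mult2 dvd_triv_left)
qed

lemma Delta_2_cong_p2:
  assumes "p = 2"
  shows "P dvd Delta p \<phi> 2 a - (a\<^sup>2 * Delta p \<phi> 1 a + (Delta p \<phi> 1 a)\<^sup>2)"
proof -
  obtain c where "Delta p \<phi> (Suc (Suc 0)) a = a ^ (p ^ Suc 0 * (p - 1)) * Delta p \<phi> (Suc 0) a
      - of_nat (p choose 2) * P ^ 0 * a ^ (p ^ Suc 0 * (p - 2)) * (Delta p \<phi> (Suc 0) a)\<^sup>2
      + P ^ (2 * 0 + 1) * c"
    using Delta_Suc_Suc_expansion by blast
  then have "Delta p \<phi> 2 a - (a\<^sup>2 * Delta p \<phi> 1 a + (Delta p \<phi> 1 a)\<^sup>2) = P * (c - (Delta p \<phi> 1 a)\<^sup>2)"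
    using assms by (simp add: numeral_2_eq_2 algebra_simps)
  then show ?thesis by simp
qed

lemma Delta_cong_odd:
  assumes "odd p"
  shows "P dvd Delta p \<phi> (Suc k) a - a ^ (p ^ Suc k - p) * Delta p \<phi> 1 a"
proof (induction k)
  case (Suc k)
  have "p \<le> p ^ Suc k" using p_pos by simp
  with Delta_Suc_Suc_cong[OF disjI2[OF assms] Suc] show ?case
    by (simp only: mult.assoc[symmetric] power_pow_Suc_mult_pred)
qed simp

lemma Delta_cong_p2:
  assumes "p = 2"
  shows "P dvd Delta p \<phi> (Suc (Suc k)) a
    - (a ^ (p ^ Suc (Suc k) - p) * Delta p \<phi> 1 a + a ^ (p ^ Suc (Suc k) - 2 * p) * Delta p \<phi> 1 a ^ p)"
proof (induction k)
  case 0
  then show ?case using Delta_2_cong_p2[OF assms] assms by (simp add: numeral_2_eq_2)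
next
  case (Suc k)
  have "p \<le> p ^ Suc (Suc k)" "2 * p \<le> p ^ Suc (Suc k)" using assms by simp_all
  with Delta_Suc_Suc_cong[OF _ Suc] show ?case
    by (simp only: distrib_left mult.assoc[symmetric] power_pow_Suc_mult_pred zero_less_Suc simp_thms)
qed

lemma teich_eq_witt_sum:
  "teich (n + 1) a = witt_sum p (n + 1)
     (map (\<lambda>s. (wV ^^ s) (s_phi p \<phi> (n + 1 - s) (Delta p \<phi> s a))) [0..<n]
      @ [(wV ^^ n) (teich 1 (Delta p \<phi> n a))])"
  (is "_ = witt_sum p (n + 1) ?xs")
proof (rule ghost_inj[OF wtrunc_teich wtrunc_witt_sum])
  fix m assume m: "m < n + 1"
  then have range: "{s \<in> {..<n + 1}. s \<le> m} = {..m}"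
    by auto
  define h where "h s = (if s \<le> m then P ^ s * (\<phi> ^^ (m - s)) (Delta p \<phi> s a) else 0)" for s
  have "map (ghost p m) ?xs = map h [0..<n + 1]"
    using m by (simp add: h_def ghost_funpow_wV ghost_s_phi teich_def p_pos)
  then have "ghost p m (witt_sum p (n + 1) ?xs) = (\<Sum>s<n + 1. h s)"
    using m by (simp add: ghost_witt_sum sum_list_map_eq_sum_count atLeast0LessThan
        flip: sum_set_upt_conv_sum_list_nat)
  also have "\<dots> = (\<Sum>s\<le>m. P ^ s * (\<phi> ^^ (m - s)) (Delta p \<phi> s a))"
    unfolding h_def range[symmetric] by (rule sum.inter_filter[symmetric]) simp
  also have "\<dots> = ghost p m (teich (n + 1) a)"
    by (simp add: ghost_teich p_pos power_eq_sum_Delta)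
  finally show "ghost p m (teich (n + 1) a) = ghost p m (witt_sum p (n + 1) ?xs)" ..
qed

end

theorem theorem3p6:
  fixes p :: nat and \<phi> :: "'a::comm_ring_1 \<Rightarrow> 'a" and a :: 'a and n :: nat
  assumes "prime p"
    and torsion_free: "\<forall>x::'a. of_nat p * x = 0 \<longrightarrow> x = 0"
    and phi_add: "\<forall>x y. \<phi> (x + y) = \<phi> x + \<phi> y"
    and phi_mult: "\<forall>x y. \<phi> (x * y) = \<phi> x * \<phi> y"
    and phi_one: "\<phi> 1 = 1"
    and frob_lift: "\<forall>x. \<exists>y. \<phi> x = x ^ p + of_nat p * y"
    and "n \<ge> 1"
  shows "teich (n + 1) a =
           witt_sum p (n + 1)
             (map (\<lambda>s. (wV ^^ s) (s_phi p \<phi> (n + 1 - s) (Delta p \<phi> s a))) [0..<n]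
              @ [(wV ^^ n) (teich 1 (Delta p \<phi> n a))])
    \<and> a ^ (p ^ n) = (\<Sum>s\<le>n. of_nat p ^ s * (\<phi> ^^ (n - s)) (Delta p \<phi> s a))
    \<and> of_nat p ^ (n - 1) * Delta p \<phi> n a = Delta p \<phi> 1 (a ^ (p ^ (n - 1)))
    \<and> (n \<ge> 2 \<and> p = 2 \<longrightarrow>
           (\<exists>c. Delta p \<phi> n a = a ^ (p ^ n - p) * Delta p \<phi> 1 a
                 + a ^ (p ^ n - 2 * p) * Delta p \<phi> 1 a ^ p + of_nat p * c))
    \<and> (n \<ge> 2 \<and> odd p \<longrightarrow>
           (\<exists>c. Delta p \<phi> n a = a ^ (p ^ n - p) * Delta p \<phi> 1 a + of_nat p * c))"
proof -
  have lift: "frobenius_lift p \<phi>"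
  proof
    fix x :: 'a
    obtain y where "\<phi> x = x ^ p + of_nat p * y"
      using frob_lift by blast
    then show "of_nat p dvd x ^ p - \<phi> x"
      by (simp add: dvd_diff_iff_eq_add)
  qed (use assms in auto)
  obtain k where k: "n = Suc k"
    using \<open>n \<ge> 1\<close> by (cases n) auto
  have two: "\<exists>c. Delta p \<phi> n a = a ^ (p ^ n - p) * Delta p \<phi> 1 a
      + a ^ (p ^ n - 2 * p) * Delta p \<phi> 1 a ^ p + of_nat p * c" if "n \<ge> 2" "p = 2"
  proof -
    obtain j where "n = Suc (Suc j)"
      using \<open>n \<ge> 2\<close> by (metis add_2_eq_Suc le_Suc_ex)
    then show ?thesis
      using frobenius_lift.Delta_cong_p2[OF lift \<open>p = 2\<close>, of j a]
      by (simp add: dvd_diff_iff_eq_add add.assoc del: power_Suc)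
  qed
  have odd: "\<exists>c. Delta p \<phi> n a = a ^ (p ^ n - p) * Delta p \<phi> 1 a + of_nat p * c" if "odd p"
    using frobenius_lift.Delta_cong_odd[OF lift that, of k a] k
    by (simp add: dvd_diff_iff_eq_add del: power_Suc)
  show ?thesis
    using frobenius_lift.teich_eq_witt_sum[OF lift] frobenius_lift.power_eq_sum_Delta[OF lift]
      frobenius_lift.P_power_mult_Delta[OF lift \<open>n \<ge> 1\<close>] two odd
    by blast
qed

end
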